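(* Let $\mathbf X_I=(X_1,\dots,X_d)$ satisfy conditions (i) and (ii) below, and let $I_1,\dots,I_p$ be a partition of $I$. Then for all $(\lambda_1,\dots,\lambda_p)\in(0,\infty)^p$, $$E\Big(\max_{1\le j\le p} M(I_j)^{\lambda_j}\Big)=\frac{L}{1+L},\qquad L=\ell_{\mathbf X_I}\Big(\sigma_1^{\eta}\sum_{j=1}^p\lambda_j^{\eta}\delta_1(I_j),\dots,\sigma_d^{\eta}\sum_{j=1}^p\lambda_j^{\eta}\delta_d(I_j)\Big).$$
   Context: Let $d\ge 1$, $I=\{1,\dots,d\}$, and let $I_1,\dots,I_p$ ($1\le p\le d$) be a partition of $I$ into nonempty blocks of consecutive indices. Let $\mathbf X_I=(X_1,\dots,X_d)$ be a random vector with joint distribution function $F_{\mathbf X_I}$ and univariate marginal distribution functions $F_i$ such that: (i) $F_i(t)=\exp(-\sigma_i t^{-1/\eta})$ for $t>0$, $i=1,\dots,d$, for some constants $\sigma_i>0$ and $\eta\in(0,1]$; (ii) the function $\ell_{\mathbf X_I}(t_1,\dots,t_d)=-\ln F_{\mathbf X_I}(t_1,\dots,t_d)$, $(t_1,\dots,t_d)\in(0,\infty)^d$, is homogeneous of order $-1/\eta$, i.e. $\ell_{\mathbf X_I}(s\mathbf t)=s^{-1/\eta}\ell_{\mathbf X_I}(\mathbf t)$ for all $s>0$. For $i\in I$ and $J\subseteq I$, $\delta_i(J)=1$ if $i\in J$ and $\delta_i(J)=0$ otherwise. For nonempty $J\subseteq I$, $M(J)=\max_{i\in J}F_i(X_i)$.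 *)

theory Defs
  imports "HOL-Probability.Probability"
begin

definition joint_cdf :: "'a measure \<Rightarrow> nat \<Rightarrow> (nat \<Rightarrow> 'a \<Rightarrow> real) \<Rightarrow> (nat \<Rightarrow> real) \<Rightarrow> real" where
  "joint_cdf P d X t = measure P {\<omega> \<in> space P. \<forall>i\<in>{1..d}. X i \<omega> \<le> t i}"

definition marg_cdf :: "'a measure \<Rightarrow> (nat \<Rightarrow> 'a \<Rightarrow> real) \<Rightarrow> nat \<Rightarrow> real \<Rightarrow> real" where
  "marg_cdf P X i x = measure P {\<omega> \<in> space P. X i \<omega> \<le> x}"

definition ell :: "'a measure \<Rightarrow> nat \<Rightarrow> (nat \<Rightarrow> 'a \<Rightarrow> real) \<Rightarrow> (nat \<Rightarrow> real) \<Rightarrow> real" where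
  "ell P d X t = - ln (joint_cdf P d X t)"

definition delta :: "nat \<Rightarrow> nat set \<Rightarrow> real" where
  "delta i J = (if i \<in> J then 1 else 0)"

definition Mmax :: "'a measure \<Rightarrow> (nat \<Rightarrow> 'a \<Rightarrow> real) \<Rightarrow> nat set \<Rightarrow> 'a \<Rightarrow> real" where
  "Mmax P X J \<omega> = Max ((\<lambda>i. marg_cdf P X i (X i \<omega>)) ` J)"

end

theory Submission
  imports Defs
begin

text \<open>The random variable Y = max_j M(I_j)^lam_j takes values in [0,1]. For 0 < y < 1 the event
  Y \<le> y says F_i(X_i) \<le> y^(1/lam_j) for every i in I_j; inverting the Frechet margins, this is
  X_i \<le> s c_i with c_i = (sigma_i lam_j)^eta and s = (-ln y)^(-eta). By homogeneity of
  ell = -ln F the probability of this event is exp(-s^(-1/eta) ell(c)) = y^L, so Y has distribution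
  function y^L on [0,1] and E Y = integral of 1 - y^L over [0,1] = L/(1+L).\<close>

lemma powr_le_iff_le_powr_inverse:
  fixes a y l :: real
  assumes "0 \<le> a" "0 < l" "0 < y"
  shows "a powr l \<le> y \<longleftrightarrow> a \<le> y powr (1 / l)"
proof
  assume "a powr l \<le> y"
  then have "(a powr l) powr (1 / l) \<le> y powr (1 / l)"
    using assms by (intro powr_mono2) auto
  then show "a \<le> y powr (1 / l)" using assms by (simp add: powr_powr)
next
  assume "a \<le> y powr (1 / l)"
  then have "a powr l \<le> (y powr (1 / l)) powr l"
    using assms by (intro powr_mono2) auto
  then show "a powr l \<le> y" using assms by (simp add: powr_powr)
qed

lemma frechet_cdf_at_scaled_quantile:
  fixes \<sigma> \<kappa> \<eta> y :: real
  assumes "0 < \<sigma>" "0 < \<kappa>" "0 < \<eta>" "0 < y" "y < 1"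
  shows "exp (- \<sigma> * ((- ln y) powr (- \<eta>) * (\<sigma> * \<kappa>) powr \<eta>) powr (- 1 / \<eta>))
       = y powr (1 / \<kappa>)"
proof -
  define a b where "a = - ln y" and "b = \<sigma> * \<kappa>"
  have "a > 0" "b > 0" using assms by (simp_all add: a_def b_def)
  then have "(a powr (- \<eta>) * b powr \<eta>) powr (- 1 / \<eta>)
      = a powr (- \<eta> * (- 1 / \<eta>)) * b powr (\<eta> * (- 1 / \<eta>))"
    by (simp add: powr_mult powr_powr)
  also have "\<dots> = a / b"
    using \<open>0 < \<eta>\<close> \<open>a > 0\<close> \<open>b > 0\<close> by (simp add: powr_minus divide_inverse)
  finally show ?thesis
    using assms by (simp add: a_def b_def powr_def)
qed

lemma Max_powr_Max_blocks:
  fixes f \<kappa> :: "'b \<Rightarrow> real" and l :: "'c \<Rightarrow> real"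
  assumes J: "finite J" "J \<noteq> {}"
    and B: "\<And>j. j \<in> J \<Longrightarrow> finite (B j) \<and> B j \<noteq> {}"
    and l_pos: "\<And>j. j \<in> J \<Longrightarrow> 0 < l j"
    and f_nonneg: "\<And>i. 0 \<le> f i"
    and \<kappa>: "\<And>j i. j \<in> J \<Longrightarrow> i \<in> B j \<Longrightarrow> \<kappa> i = l j"
  shows "Max ((\<lambda>j. Max (f ` B j) powr l j) ` J)
       = Max ((\<lambda>i. f i powr \<kappa> i) ` (\<Union>j\<in>J. B j))"
proof (rule antisym)
  have fin: "finite (\<Union>j\<in>J. B j)" using J B by blast
  show "Max ((\<lambda>j. Max (f ` B j) powr l j) ` J)
      \<le> Max ((\<lambda>i. f i powr \<kappa> i) ` (\<Union>j\<in>J. B j))"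
  proof (rule Max.boundedI)
    fix a assume "a \<in> (\<lambda>j. Max (f ` B j) powr l j) ` J"
    then obtain j where j: "j \<in> J" and a: "a = Max (f ` B j) powr l j" by blast
    have "Max (f ` B j) \<in> f ` B j" using B[OF j] by (intro Max_in) auto
    then obtain i where i: "i \<in> B j" "Max (f ` B j) = f i" by blast
    then show "a \<le> Max ((\<lambda>i. f i powr \<kappa> i) ` (\<Union>j\<in>J. B j))"
      using fin j i \<kappa>[OF j i(1)] a
      by (intro Max_ge_iff[THEN iffD2]) (auto intro!: bexI[of _ j] bexI[of _ i])
  qed (use J in auto)
  show "Max ((\<lambda>i. f i powr \<kappa> i) ` (\<Union>j\<in>J. B j))
      \<le> Max ((\<lambda>j. Max (f ` B j) powr l j) ` J)"
  proof (rule Max.boundedI)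
    fix a assume "a \<in> (\<lambda>i. f i powr \<kappa> i) ` (\<Union>j\<in>J. B j)"
    then obtain j i where j: "j \<in> J" and i: "i \<in> B j" and a: "a = f i powr \<kappa> i" by blast
    have "f i \<le> Max (f ` B j)" using B[OF j] i by simp
    then have "a \<le> Max (f ` B j) powr l j"
      unfolding a \<kappa>[OF j i] using l_pos[OF j] f_nonneg by (intro powr_mono2) auto
    then show "a \<le> Max ((\<lambda>j. Max (f ` B j) powr l j) ` J)"
      using J j by (intro Max_ge_iff[THEN iffD2]) auto
  qed (use fin J B in auto)
qed

lemma nn_integral_eq_nn_integral_tail:
  fixes Y :: "'a \<Rightarrow> real"
  assumes "sigma_finite_measure M" and Y: "Y \<in> borel_measurable M"
    and Y_nonneg: "\<And>\<omega>. \<omega> \<in> space M \<Longrightarrow> 0 \<le> Y \<omega>"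
  shows "(\<integral>\<^sup>+\<omega>. Y \<omega> \<partial>M)
       = (\<integral>\<^sup>+y. indicator {0<..} y * emeasure M {\<omega>\<in>space M. y < Y \<omega>} \<partial>lborel)"
proof -
  interpret pair_sigma_finite M lborel
    using assms(1) by (intro pair_sigma_finite.intro) (auto intro: lborel.sigma_finite_measure_axioms)
  define f where "f \<omega> y = (if 0 < y \<and> y < Y \<omega> then 1 else 0 :: ennreal)" for \<omega> y
  have "(\<integral>\<^sup>+\<omega>. Y \<omega> \<partial>M) = (\<integral>\<^sup>+\<omega>. (\<integral>\<^sup>+y. f \<omega> y \<partial>lborel) \<partial>M)"
  proof (rule nn_integral_cong)
    fix \<omega> assume "\<omega> \<in> space M"
    then have "f \<omega> = indicator {0<..<Y \<omega>}"
      using Y_nonneg by (auto simp: f_def indicator_def)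
    then show "ennreal (Y \<omega>) = (\<integral>\<^sup>+y. f \<omega> y \<partial>lborel)"
      using Y_nonneg \<open>\<omega> \<in> space M\<close> by simp
  qed
  also have "\<dots> = (\<integral>\<^sup>+y. (\<integral>\<^sup>+\<omega>. f \<omega> y \<partial>M) \<partial>lborel)"
  proof -
    have "case_prod f \<in> borel_measurable (M \<Otimes>\<^sub>M lborel)"
      unfolding f_def using Y by measurable
    then show ?thesis by (rule Fubini'[symmetric])
  qed
  also have "\<dots> = (\<integral>\<^sup>+y. indicator {0<..} y * emeasure M {\<omega>\<in>space M. y < Y \<omega>} \<partial>lborel)"
  proof (rule nn_integral_cong)
    fix y :: real
    have "(\<integral>\<^sup>+\<omega>. f \<omega> y \<partial>M)
        = (\<integral>\<^sup>+\<omega>. indicator {0<..} y * indicator {\<omega>\<in>space M. y < Y \<omega>} \<omega> \<partial>M)"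
      by (rule nn_integral_cong) (auto simp: f_def indicator_def)
    also have "\<dots> = indicator {0<..} y * emeasure M {\<omega>\<in>space M. y < Y \<omega>}"
      using Y by (subst nn_integral_cmult_indicator) auto
    finally show "(\<integral>\<^sup>+\<omega>. f \<omega> y \<partial>M)
        = indicator {0<..} y * emeasure M {\<omega>\<in>space M. y < Y \<omega>}" .
  qed
  finally show ?thesis .
qed

lemma nn_integral_one_minus_powr:
  assumes "0 \<le> (L::real)"
  shows "(\<integral>\<^sup>+y. indicator {0<..<1} y * ennreal (1 - y powr L) \<partial>lborel) = L / (1 + L)"
proof -
  have "((\<lambda>y::real. y powr L) has_integral (1 / (L + 1))) {0..1}"
    using has_integral_powr_from_0[of L 1] assms by simp
  from has_integral_diff[OF has_integral_const_real[of 1 0 1] this]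
  have "((\<lambda>y::real. 1 - y powr L) has_integral (L / (1 + L))) {0<..<1}"
    using assms by (simp add: has_integral_Icc_iff_Ioo field_simps)
  moreover have "0 \<le> 1 - y powr L" if "y \<in> {0<..<1}" for y
    using that assms by (auto intro!: powr_le1)
  ultimately show ?thesis
    by (subst mult.commute) (rule nn_integral_has_integral_lebesgue')
qed

lemma (in prob_space) expectation_eq_of_cdf_powr:
  fixes Y :: "'a \<Rightarrow> real"
  assumes Y: "Y \<in> borel_measurable M"
    and Y_01: "\<And>\<omega>. \<omega> \<in> space M \<Longrightarrow> 0 \<le> Y \<omega> \<and> Y \<omega> \<le> 1"
    and "0 \<le> L"
    and cdf: "\<And>y. 0 < y \<Longrightarrow> y < 1 \<Longrightarrow> prob {\<omega>\<in>space M. Y \<omega> \<le> y} = y powr L"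
  shows "expectation Y = L / (1 + L)"
proof -
  have tail: "indicator {0<..} y * emeasure M {\<omega>\<in>space M. y < Y \<omega>}
      = indicator {0<..<1} y * ennreal (1 - y powr L)" for y
  proof (cases "0 < y \<and> y < 1")
    case True
    have "{\<omega>\<in>space M. y < Y \<omega>} = space M - {\<omega>\<in>space M. Y \<omega> \<le> y}" by auto
    moreover have "{\<omega>\<in>space M. Y \<omega> \<le> y} \<in> events" using Y by measurable
    ultimately show ?thesis
      using True cdf by (simp add: emeasure_eq_measure prob_compl)
  next
    case False
    show ?thesis
    proof (cases "0 < y")
      case True
      with False have empty: "{\<omega>\<in>space M. y < Y \<omega>} = {}" using Y_01 by force
      show ?thesis unfolding empty using False by simp
    qed simp
  qed
  have "(\<integral>\<^sup>+\<omega>. Y \<omega> \<partial>M) = L / (1 + L)"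
    using nn_integral_eq_nn_integral_tail[OF sigma_finite_measure_axioms Y] Y_01
      nn_integral_one_minus_powr[OF \<open>0 \<le> L\<close>] by (simp add: tail)
  moreover have "integrable M Y"
    by (rule integrable_const_bound[where B=1]) (use Y_01 Y in auto)
  ultimately have "ennreal (expectation Y) = L / (1 + L)"
    using Y_01 by (subst nn_integral_eq_integral[symmetric]) auto
  moreover have "0 \<le> expectation Y" using Y_01 by (intro integral_nonneg_AE) auto
  ultimately show ?thesis using \<open>0 \<le> L\<close> by simp
qed

lemma (in prob_space) joint_cdf_scaled_tendsto_1:
  assumes X: "\<And>i. i \<in> {1..d} \<Longrightarrow> X i \<in> borel_measurable M"
    and t: "\<forall>i\<in>{1..d}. 0 < t i"
  shows "(\<lambda>n. joint_cdf M d X (\<lambda>i. real (Suc n) * t i)) \<longlonglongrightarrow> 1"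
proof -
  define A where "A n = {\<omega>\<in>space M. \<forall>i\<in>{1..d}. X i \<omega> \<le> real (Suc n) * t i}" for n
  have "range A \<subseteq> events"
    unfolding A_def using X by auto
  moreover have "incseq A"
  proof (rule incseq_SucI)
    fix n
    have "real (Suc n) * t i \<le> real (Suc (Suc n)) * t i" if "i \<in> {1..d}" for i
      using t that by (auto intro!: mult_right_mono less_imp_le)
    then show "A n \<subseteq> A (Suc n)"
      unfolding A_def by (auto intro: order_trans)
  qed
  moreover have "(\<Union>n. A n) = space M"
  proof (intro subset_antisym subsetI)
    fix \<omega> assume \<omega>: "\<omega> \<in> space M"
    have "\<forall>\<^sub>F n in sequentially. X i \<omega> \<le> real (Suc n) * t i" if i: "i \<in> {1..d}" for i
    proof -
      have "0 < t i" using t i by blast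
      obtain N :: nat where "X i \<omega> / t i \<le> real N" using real_arch_simple by blast
      then have "X i \<omega> \<le> real (Suc n) * t i" if "N \<le> n" for n
      proof -
        have "X i \<omega> / t i \<le> real (Suc n)" using \<open>X i \<omega> / t i \<le> real N\<close> that by linarith
        then show ?thesis using \<open>0 < t i\<close> by (simp add: pos_divide_le_eq)
      qed
      then show ?thesis unfolding eventually_sequentially by blast
    qed
    then have "\<forall>\<^sub>F n in sequentially. \<forall>i\<in>{1..d}. X i \<omega> \<le> real (Suc n) * t i"
      by (intro eventually_ball_finite) auto
    then show "\<omega> \<in> (\<Union>n. A n)"
      using \<omega> by (auto simp: A_def eventually_sequentially)
  qed (auto simp: A_def)
  ultimately have "(\<lambda>n. prob (A n)) \<longlonglongrightarrow> prob (space M)"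
    by (metis finite_Lim_measure_incseq)
  then show ?thesis by (simp add: A_def joint_cdf_def prob_space)
qed

locale frechet_homogeneous = prob_space P for P :: "'a measure" +
  fixes d :: nat and X :: "nat \<Rightarrow> 'a \<Rightarrow> real" and \<sigma> :: "nat \<Rightarrow> real" and \<eta> :: real
  assumes d_pos: "1 \<le> d"
    and X_measurable: "\<And>i. i \<in> {1..d} \<Longrightarrow> X i \<in> borel_measurable P"
    and \<sigma>_pos: "\<And>i. i \<in> {1..d} \<Longrightarrow> 0 < \<sigma> i"
    and \<eta>_pos: "0 < \<eta>"
    and marg_cdf_frechet: "\<And>i t. i \<in> {1..d} \<Longrightarrow> 0 < t \<Longrightarrow>
          marg_cdf P X i t = exp (- \<sigma> i * t powr (- 1 / \<eta>))"
    and ell_homogeneous: "\<And>s t. 0 < s \<Longrightarrow> \<forall>i\<in>{1..d}. 0 < t i \<Longrightarrow>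
          ell P d X (\<lambda>i. s * t i) = s powr (- 1 / \<eta>) * ell P d X t"
begin

lemma mono_marg_cdf:
  assumes "i \<in> {1..d}"
  shows "mono (marg_cdf P X i)"
  unfolding marg_cdf_def mono_def using X_measurable[OF assms]
  by (auto intro!: finite_measure_mono)

lemma marg_cdf_le_iff:
  assumes i: "i \<in> {1..d}" and "0 < t"
  shows "marg_cdf P X i x \<le> marg_cdf P X i t \<longleftrightarrow> x \<le> t"
proof
  assume "x \<le> t"
  then show "marg_cdf P X i x \<le> marg_cdf P X i t" by (rule monoD[OF mono_marg_cdf[OF i]])
next
  assume le: "marg_cdf P X i x \<le> marg_cdf P X i t"
  show "x \<le> t"
  proof (rule ccontr)
    assume "\<not> x \<le> t"
    then have "x powr (- 1 / \<eta>) < t powr (- 1 / \<eta>)"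
      using \<open>0 < t\<close> \<eta>_pos by (intro powr_less_mono2_neg) (auto simp: divide_neg_pos)
    then have "marg_cdf P X i t < marg_cdf P X i x"
      using \<open>\<not> x \<le> t\<close> \<open>0 < t\<close> \<sigma>_pos[OF i] by (simp add: marg_cdf_frechet[OF i])
    with le show False by simp
  qed
qed

lemma joint_cdf_less_1:
  assumes "\<forall>i\<in>{1..d}. 0 < t i"
  shows "joint_cdf P d X t < 1"
proof -
  have one: "1 \<in> {1..d}" using d_pos by simp
  then have "0 < t 1" using assms by blast
  have "joint_cdf P d X t \<le> marg_cdf P X 1 (t 1)"
    unfolding joint_cdf_def marg_cdf_def using one X_measurable[OF one]
    by (intro finite_measure_mono) auto
  also have "\<dots> = exp (- \<sigma> 1 * t 1 powr (- 1 / \<eta>))"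
    by (rule marg_cdf_frechet[OF one \<open>0 < t 1\<close>])
  also have "\<dots> < 1"
    using \<sigma>_pos[OF one] \<open>0 < t 1\<close> by simp
  finally show ?thesis .
qed

text \<open>Since \<open>ln 0 = 0\<close>, a zero of the joint distribution function would make \<open>ell\<close> vanish
  there and, by homogeneity, along the whole ray \<open>n t\<close>; the distribution function would then
  be \<open>0\<close> on that ray, although it tends to \<open>1\<close>.\<close>

lemma joint_cdf_pos:
  assumes t: "\<forall>i\<in>{1..d}. 0 < t i"
  shows "0 < joint_cdf P d X t"
proof (rule ccontr)
  assume "\<not> 0 < joint_cdf P d X t"
  moreover have "0 \<le> joint_cdf P d X t" by (simp add: joint_cdf_def)
  ultimately have "joint_cdf P d X t = 0" by simp
  then have "ell P d X t = 0"
    by (simp add: ell_def)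
  have "joint_cdf P d X (\<lambda>i. real (Suc n) * t i) = 0" for n
  proof -
    let ?F = "joint_cdf P d X (\<lambda>i. real (Suc n) * t i)"
    have "ln ?F = 0"
      using ell_homogeneous[of "real (Suc n)" t] t \<open>ell P d X t = 0\<close> by (simp add: ell_def)
    moreover have "?F < 1" using t by (intro joint_cdf_less_1) auto
    moreover have "0 \<le> ?F" by (simp add: joint_cdf_def)
    ultimately show ?thesis
      by (metis ln_less_zero less_eq_real_def less_irrefl)
  qed
  with joint_cdf_scaled_tendsto_1[where X=X, OF X_measurable t]
  have "(\<lambda>n. 0::real) \<longlonglongrightarrow> 1" by simp
  then show False using LIMSEQ_unique[OF tendsto_const, of "0::real" 1] by simp
qed

lemma ell_pos:
  assumes "\<forall>i\<in>{1..d}. 0 < t i"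
  shows "0 < ell P d X t"
  using joint_cdf_pos[OF assms] joint_cdf_less_1[OF assms] by (simp add: ell_def)

lemma prob_Max_powr_le:
  assumes \<kappa>: "\<And>i. i \<in> {1..d} \<Longrightarrow> 0 < \<kappa> i" and y: "0 < y" "y < 1"
  shows "prob {\<omega>\<in>space P. Max ((\<lambda>i. marg_cdf P X i (X i \<omega>) powr \<kappa> i) ` {1..d}) \<le> y}
       = y powr ell P d X (\<lambda>i. \<sigma> i powr \<eta> * \<kappa> i powr \<eta>)"
proof -
  define s where "s = (- ln y) powr (- \<eta>)"
  define c where "c = (\<lambda>i. \<sigma> i powr \<eta> * \<kappa> i powr \<eta>)"
  have "0 < s" using y by (simp add: s_def)
  have c_pos: "\<forall>i\<in>{1..d}. 0 < c i"
  proof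
    fix i assume "i \<in> {1..d}"
    then show "0 < c i" using \<sigma>_pos[of i] \<kappa>[of i] by (simp add: c_def)
  qed
  have "marg_cdf P X i (X i \<omega>) powr \<kappa> i \<le> y \<longleftrightarrow> X i \<omega> \<le> s * c i"
    if i: "i \<in> {1..d}" for i \<omega>
  proof -
    have "0 < s * c i" using \<open>0 < s\<close> c_pos i by simp
    have "marg_cdf P X i (s * c i) = y powr (1 / \<kappa> i)"
      using marg_cdf_frechet[OF i \<open>0 < s * c i\<close>] \<sigma>_pos[OF i] \<kappa>[OF i] \<eta>_pos y
        frechet_cdf_at_scaled_quantile[of "\<sigma> i" "\<kappa> i" \<eta> y]
      by (simp add: s_def c_def powr_mult)
    then show ?thesis
      using powr_le_iff_le_powr_inverse[of "marg_cdf P X i (X i \<omega>)" "\<kappa> i" y] \<kappa>[OF i] y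
        marg_cdf_le_iff[OF i \<open>0 < s * c i\<close>]
      by (simp add: marg_cdf_def)
  qed
  then have "{\<omega>\<in>space P. Max ((\<lambda>i. marg_cdf P X i (X i \<omega>) powr \<kappa> i) ` {1..d}) \<le> y}
      = {\<omega>\<in>space P. \<forall>i\<in>{1..d}. X i \<omega> \<le> s * c i}"
    using d_pos by auto
  then have "prob {\<omega>\<in>space P. Max ((\<lambda>i. marg_cdf P X i (X i \<omega>) powr \<kappa> i) ` {1..d}) \<le> y}
      = exp (- ell P d X (\<lambda>i. s * c i))"
    using joint_cdf_pos[of "\<lambda>i. s * c i"] \<open>0 < s\<close> c_pos by (simp add: ell_def joint_cdf_def)
  also have "ell P d X (\<lambda>i. s * c i) = - ln y * ell P d X c"
    using ell_homogeneous[OF \<open>0 < s\<close> c_pos] y \<eta>_pos by (simp add: s_def powr_powr)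
  also have "exp (- (- ln y * ell P d X c)) = y powr ell P d X c"
    using y by (simp add: powr_def)
  finally show ?thesis unfolding c_def .
qed

lemma expectation_Max_powr:
  assumes \<kappa>: "\<And>i. i \<in> {1..d} \<Longrightarrow> 0 < \<kappa> i"
  shows "expectation (\<lambda>\<omega>. Max ((\<lambda>i. marg_cdf P X i (X i \<omega>) powr \<kappa> i) ` {1..d}))
       = ell P d X (\<lambda>i. \<sigma> i powr \<eta> * \<kappa> i powr \<eta>)
         / (1 + ell P d X (\<lambda>i. \<sigma> i powr \<eta> * \<kappa> i powr \<eta>))"
proof (rule expectation_eq_of_cdf_powr)
  have "(\<lambda>\<omega>. marg_cdf P X i (X i \<omega>) powr \<kappa> i) \<in> borel_measurable P" if "i \<in> {1..d}" for i
    using measurable_compose[OF X_measurable borel_measurable_mono[OF mono_marg_cdf]] that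
    by measurable
  then show "(\<lambda>\<omega>. Max ((\<lambda>i. marg_cdf P X i (X i \<omega>) powr \<kappa> i) ` {1..d})) \<in> borel_measurable P"
    by (intro borel_measurable_Max finite_atLeastAtMost)
  show "0 \<le> ell P d X (\<lambda>i. \<sigma> i powr \<eta> * \<kappa> i powr \<eta>)"
  proof (intro less_imp_le ell_pos ballI)
    fix i assume "i \<in> {1..d}"
    then show "0 < \<sigma> i powr \<eta> * \<kappa> i powr \<eta>" using \<sigma>_pos[of i] \<kappa>[of i] by simp
  qed
  fix \<omega>
  have "0 \<le> marg_cdf P X i (X i \<omega>) powr \<kappa> i \<and> marg_cdf P X i (X i \<omega>) powr \<kappa> i \<le> 1"
    if "i \<in> {1..d}" for i
    using \<kappa>[OF that] by (auto simp: marg_cdf_def intro!: powr_le1)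
  then show "0 \<le> Max ((\<lambda>i. marg_cdf P X i (X i \<omega>) powr \<kappa> i) ` {1..d})
      \<and> Max ((\<lambda>i. marg_cdf P X i (X i \<omega>) powr \<kappa> i) ` {1..d}) \<le> 1"
    using d_pos by (auto simp: Max_ge_iff intro!: bexI[of _ 1])
qed (use prob_Max_powr_le[OF \<kappa>] in auto)

end

theorem lemma2:
  fixes P :: "'a measure" and X :: "nat \<Rightarrow> 'a \<Rightarrow> real"
    and d p :: nat and Ib :: "nat \<Rightarrow> nat set"
    and \<sigma> :: "nat \<Rightarrow> real" and \<eta> :: real and lam :: "nat \<Rightarrow> real"
  assumes "prob_space P"
    and "d \<ge> 1" and "1 \<le> p" and "p \<le> d"
    and rv: "\<And>i. i \<in> {1..d} \<Longrightarrow> X i \<in> borel_measurable P"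
    and blocks_ne: "\<And>j. j \<in> {1..p} \<Longrightarrow> Ib j \<noteq> {}"
    and blocks_consec: "\<And>j. j \<in> {1..p} \<Longrightarrow> \<exists>a b. Ib j = {a..b}"
    and blocks_disj: "\<And>j k. j \<in> {1..p} \<Longrightarrow> k \<in> {1..p} \<Longrightarrow> j \<noteq> k \<Longrightarrow> Ib j \<inter> Ib k = {}"
    and blocks_cover: "(\<Union>j\<in>{1..p}. Ib j) = {1..d}"
    and sigma_pos: "\<And>i. i \<in> {1..d} \<Longrightarrow> \<sigma> i > 0"
    and eta: "0 < \<eta>" "\<eta> \<le> 1"
    and marg: "\<And>i t. i \<in> {1..d} \<Longrightarrow> t > 0 \<Longrightarrow>
                 marg_cdf P X i t = exp (- \<sigma> i * t powr (- 1 / \<eta>))"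
    and homog: "\<And>s t. s > 0 \<Longrightarrow> (\<forall>i\<in>{1..d}. t i > 0) \<Longrightarrow>
                 ell P d X (\<lambda>i. s * t i) = s powr (- 1 / \<eta>) * ell P d X t"
    and lam_pos: "\<And>j. j \<in> {1..p} \<Longrightarrow> lam j > 0"
  shows "(\<integral>\<omega>. Max ((\<lambda>j. Mmax P X (Ib j) \<omega> powr lam j) ` {1..p}) \<partial>P)
       = (let L = ell P d X (\<lambda>i. \<sigma> i powr \<eta> * (\<Sum>j=1..p. lam j powr \<eta> * delta i (Ib j)))
          in L / (1 + L))"
proof -
  interpret frechet_homogeneous P d X \<sigma> \<eta>
    by (intro frechet_homogeneous.intro frechet_homogeneous_axioms.intro) (fact assms)+
  \<comment> \<open>the exponent of the block of \<open>i\<close>, written so that \<open>\<kappa> i powr \<eta>\<close> is the sum above\<close>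
  define \<kappa> where "\<kappa> i = (\<Sum>j=1..p. lam j powr \<eta> * delta i (Ib j)) powr (1 / \<eta>)" for i
  have \<kappa>_block: "\<kappa> i = lam j" if j: "j \<in> {1..p}" and i: "i \<in> Ib j" for i j
  proof -
    have "(\<Sum>k=1..p. lam k powr \<eta> * delta i (Ib k))
        = (\<Sum>k=1..p. if k = j then lam k powr \<eta> else 0)"
      using blocks_disj[OF _ j] i by (intro sum.cong) (auto simp: delta_def)
    then show ?thesis
      using j lam_pos[OF j] eta by (simp add: \<kappa>_def powr_powr)
  qed
  have \<kappa>_pos: "0 < \<kappa> i" if "i \<in> {1..d}" for i
  proof -
    have "i \<in> (\<Union>j\<in>{1..p}. Ib j)" using that blocks_cover by simp
    then obtain j where "j \<in> {1..p}" "i \<in> Ib j" by blast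
    then show ?thesis using \<kappa>_block[of j i] lam_pos[of j] by simp
  qed
  have "Max ((\<lambda>j. Mmax P X (Ib j) \<omega> powr lam j) ` {1..p})
      = Max ((\<lambda>i. marg_cdf P X i (X i \<omega>) powr \<kappa> i) ` {1..d})" for \<omega>
    unfolding Mmax_def blocks_cover[symmetric]
  proof (rule Max_powr_Max_blocks)
    show "finite (Ib j) \<and> Ib j \<noteq> {}" if "j \<in> {1..p}" for j
    proof
      have "Ib j \<subseteq> {1..d}" using that blocks_cover by blast
      then show "finite (Ib j)" by (rule finite_subset) simp
    qed (rule blocks_ne[OF that])
    show "{1..p} \<noteq> {}" using \<open>1 \<le> p\<close> by simp
  qed (simp_all add: lam_pos \<kappa>_block marg_cdf_def)
  moreover have "\<kappa> i powr \<eta> = (\<Sum>j=1..p. lam j powr \<eta> * delta i (Ib j))" for i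
    using eta by (simp add: \<kappa>_def powr_powr sum_nonneg delta_def)
  ultimately show ?thesis
    using expectation_Max_powr[OF \<kappa>_pos] by (simp add: Let_def)
qed

end
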